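(* Let $j\ge 0$ be an integer and let $T_j$ be the poset defined below, with its rank function $\rho$. Then $$\sum_{I\in J(T_j)}\ \sum_{a\in I}\rho(a)=\frac{j^2+5j+2}{8j+4}\binom{2j+2}{j+1}-4^j.$$
   Context: For an integer $j\ge 0$, let $T_j$ be the set of positive integers that cannot be written as $xj+y(j+1)$ with $x,y$ nonnegative integers. For $j\le 1$ this set is empty. $T_j$ is partially ordered by taking the transitive closure of the covering relations: $a$ covers $b$ whenever $a-b\in\{j,j+1\}$. The minimal elements of $T_j$ are $1,2,\dots,j-1$. These have rank $0$, and $\rho(a)$ is the rank of $a$, namely the length of a maximal chain from a minimal element up to $a$ (this poset is graded). $J(T_j)$ is the set of order ideals of $T_j$, i.e., subsets $I$ such that $a\in I$ and $b\le a$ imply $b\in I$. The empty set is an order ideal. *)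

theory Defs
  imports "HOL-Analysis.Analysis"
begin

definition T :: "nat \<Rightarrow> nat set" where
  "T j = {n. 0 < n \<and> \<not> (\<exists>x y. n = x * j + y * (j + 1))}"

definition covers :: "nat \<Rightarrow> nat \<Rightarrow> nat \<Rightarrow> bool" where
  "covers j a b \<longleftrightarrow> a \<in> T j \<and> b \<in> T j \<and> b < a \<and> (a - b = j \<or> a - b = j + 1)"

definition Tle :: "nat \<Rightarrow> nat \<Rightarrow> nat \<Rightarrow> bool" where
  "Tle j b a \<longleftrightarrow> b \<in> T j \<and> a \<in> T j \<and> (b, a) \<in> {(x, y). covers j y x}\<^sup>*"

definition minimal :: "nat \<Rightarrow> nat \<Rightarrow> bool" where
  "minimal j a \<longleftrightarrow> a \<in> T j \<and> (\<forall>b. Tle j b a \<longrightarrow> b = a)"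

definition chain_to :: "nat \<Rightarrow> nat list \<Rightarrow> nat \<Rightarrow> bool" where
  "chain_to j cs a \<longleftrightarrow> cs \<noteq> [] \<and> minimal j (hd cs) \<and> last cs = a \<and>
     (\<forall>i. Suc i < length cs \<longrightarrow> covers j (cs ! Suc i) (cs ! i))"

definition rho :: "nat \<Rightarrow> nat \<Rightarrow> nat" where
  "rho j a = Max {length cs - 1 | cs. chain_to j cs a}"

definition ideals :: "nat \<Rightarrow> nat set set" where
  "ideals j = {I. I \<subseteq> T j \<and> (\<forall>a b. a \<in> I \<and> Tle j b a \<longrightarrow> b \<in> I)}"

end

theory Submission
  imports Defs
begin

text \<open>For \<open>j = n + 1\<close> every element of \<open>T j\<close> is \<open>t * j + x + t\<close> with \<open>0 < x\<close> and
  \<open>x + t \<le> n\<close>, and its rank is \<open>t\<close>. An order ideal is determined by its column heights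
  \<open>h x = #{t. t * j + x + t \<in> I}\<close>, and these range exactly over the sequences with
  \<open>h n \<le> 1\<close> and \<open>h x \<le> h (x + 1) + 1\<close>; the ideal contributes \<open>\<Sum>x. h x choose 2\<close>.
  Splitting off the first entry gives recursions for the number and total weight of such
  sequences, which are solved by integer combinations of
  \<open>E k m = \<Sum>i\<le>k. 4^(k-i) * (2i + m - 1 choose i)\<close>. The result is that the rank sum \<open>S j\<close>
  satisfies \<open>S (j + 1) = 4 * S j + (2j choose j + 2)\<close> and \<open>S 0 = 0\<close>; two ratio identities for
  central binomial coefficients show that the right-hand side obeys the same recursion.\<close>

declare binomial_Suc_Suc [simp del]

section \<open>The poset \<open>T j\<close> in coordinates\<close>

lemma mem_T_iff:
  assumes "0 < j"
  shows "a \<in> T j \<longleftrightarrow> a div j < a mod j"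
proof
  assume a: "a \<in> T j"
  show "a div j < a mod j"
  proof (rule ccontr)
    assume "\<not> a div j < a mod j"
    then obtain d where d: "a div j = a mod j + d"
      using le_iff_add by (metis not_less)
    have "a = d * j + a mod j * (j + 1)"
      using div_mult_mod_eq[of a j] unfolding d by (simp add: algebra_simps)
    then show False
      using a unfolding T_def by blast
  qed
next
  assume lt: "a div j < a mod j"
  have "a \<noteq> x * j + y * (j + 1)" for x y
  proof
    assume "a = x * j + y * (j + 1)"
    then have a: "a = (x + y) * j + y"
      by (simp add: algebra_simps)
    then have "a div j = x + y + y div j" "a mod j = y mod j"
      using assms by simp_all
    then show False
      using lt mod_less_eq_dividend[of y j] by linarith
  qed
  moreover have "0 < a"
    using lt by (cases "a = 0") auto
  ultimately show "a \<in> T j"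
    unfolding T_def by blast
qed

text \<open>For \<open>j > 0\<close> the elements of \<open>T j\<close> are the numbers \<open>cell j x t\<close> with \<open>0 < x\<close> and
  \<open>x + t < j\<close>; the covering relation lowers \<open>t\<close> by one, which is therefore the rank.\<close>

definition cell :: "nat \<Rightarrow> nat \<Rightarrow> nat \<Rightarrow> nat" where
  "cell j x t = t * j + (x + t)"

lemma cell_div_mod:
  assumes "x + t < j"
  shows "cell j x t div j = t" "cell j x t mod j = x + t"
  using assms by (simp_all add: cell_def)

lemma cell_inject:
  assumes "x + t < j" "x' + t' < j"
  shows "cell j x t = cell j x' t' \<longleftrightarrow> x = x' \<and> t = t'"
  using cell_div_mod[OF assms(1)] cell_div_mod[OF assms(2)] by (metis add_right_cancel)

lemma cell_in_T:
  assumes "0 < x" "x + t < j"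
  shows "cell j x t \<in> T j"
  using assms cell_div_mod[OF assms(2)] mem_T_iff[of j] by simp

lemma T_cellE:
  assumes "0 < j" "a \<in> T j"
  obtains x t where "a = cell j x t" "0 < x" "x + t < j"
proof
  have lt: "a div j < a mod j"
    using assms mem_T_iff by blast
  show "a = cell j (a mod j - a div j) (a div j)"
    unfolding cell_def using lt div_mult_mod_eq[of a j] by simp
  show "0 < a mod j - a div j" "a mod j - a div j + a div j < j"
    using lt assms(1) by simp_all
qed

lemma covers_cell_up:
  assumes "0 < x" "x + Suc t < j"
  shows "covers j (cell j x (Suc t)) (cell j x t)"
  using assms cell_in_T[of x "Suc t" j] cell_in_T[of x t j] by (auto simp: covers_def cell_def)

lemma covers_cell_diag:
  assumes "0 < x" "x + Suc t < j"
  shows "covers j (cell j x (Suc t)) (cell j (Suc x) t)"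
  using assms cell_in_T[of x "Suc t" j] cell_in_T[of "Suc x" t j] by (auto simp: covers_def cell_def)

lemma covers_cellE:
  assumes "0 < j" "covers j a b"
  obtains x t where "a = cell j x (Suc t)" "b = cell j x t \<or> b = cell j (Suc x) t"
    "0 < x" "x + Suc t < j"
proof -
  have T: "a \<in> T j" "b \<in> T j" and diff: "a = b + j \<or> a = b + j + 1"
    using assms(2) unfolding covers_def by auto
  obtain x t where a: "a = cell j x t" "0 < x" "x + t < j"
    using T_cellE[OF assms(1) T(1)] .
  obtain y s where b: "b = cell j y s" "0 < y" "y + s < j"
    using T_cellE[OF assms(1) T(2)] .
  have a': "a div j = t" "a mod j = x + t" and b': "b div j = s" "b mod j = y + s"
    using cell_div_mod a b by simp_all
  from diff have "t = Suc s \<and> (y = x \<or> y = Suc x)"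
  proof
    assume "a = b + j"
    then have "a div j = Suc (b div j)" "a mod j = b mod j"
      using assms(1) by simp_all
    then show ?thesis using a' b' by simp
  next
    assume ab: "a = b + j + 1"
    show ?thesis
    proof (cases "y + Suc s < j")
      case True
      have "a = cell j y (Suc s)"
        using ab b by (simp add: cell_def)
      then show ?thesis
        using a cell_inject[OF a(3) True] by simp
    next
      case False
      then have "a = (s + 2) * j"
        using ab b by (simp add: cell_def algebra_simps)
      then show ?thesis
        using a' a(2) by simp
    qed
  qed
  then show thesis
    using that a b by auto
qed

lemma covers_imp_Tle: "covers j a b \<Longrightarrow> Tle j b a"
  unfolding Tle_def by (auto simp: covers_def)

lemma minimal_div_eq_0:
  assumes j: "0 < j" and m: "minimal j a"
  shows "a div j = 0"
proof (rule ccontr)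
  assume "a div j \<noteq> 0"
  obtain x t where a: "a = cell j x t" "0 < x" "x + t < j"
    using T_cellE[OF j] m unfolding minimal_def by blast
  then obtain s where t: "t = Suc s"
    using \<open>a div j \<noteq> 0\<close> cell_div_mod(1) by (metis not0_implies_Suc)
  have "covers j a (cell j x s)"
    using covers_cell_up a t by simp
  then have "cell j x s = a"
    using m covers_imp_Tle unfolding minimal_def by blast
  then show False
    using a t cell_inject[of x s j x t] by simp
qed

lemma minimal_cell_0:
  assumes "0 < x" "x < j"
  shows "minimal j (cell j x 0)"
proof -
  have "b = x" if "Tle j b x" for b
  proof -
    from that have "(b, x) \<in> {(u, v). covers j v u}\<^sup>*"
      unfolding Tle_def by simp
    then show ?thesis
      by (cases rule: rtranclE) (use assms in \<open>auto simp: covers_def\<close>)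
  qed
  then show ?thesis
    using cell_in_T[of x 0 j] assms unfolding minimal_def by (simp add: cell_def)
qed

lemma chain_to_length:
  assumes j: "0 < j" and c: "chain_to j cs a"
  shows "length cs = Suc (a div j)"
proof -
  have ne: "cs \<noteq> []" and hd: "minimal j (hd cs)" and last: "last cs = a"
    and cov: "\<And>i. Suc i < length cs \<Longrightarrow> covers j (cs ! Suc i) (cs ! i)"
    using c unfolding chain_to_def by blast+
  have "cs ! i div j = i" if "i < length cs" for i
    using that
  proof (induction i)
    case 0
    then show ?case using minimal_div_eq_0[OF j hd] ne by (simp add: hd_conv_nth)
  next
    case (Suc i)
    obtain x t where "cs ! Suc i = cell j x (Suc t)" "cs ! i \<in> {cell j x t, cell j (Suc x) t}" "x + Suc t < j"
      using covers_cellE[OF j cov[OF Suc.prems]] by blast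
    then show ?case
      using Suc cell_div_mod[of x "Suc t" j] cell_div_mod[of x t j] cell_div_mod[of "Suc x" t j] by auto
  qed
  then show ?thesis
    using ne last by (metis One_nat_def Suc_pred diff_less last_conv_nth length_greater_0_conv zero_less_one)
qed

lemma chain_to_cell:
  assumes "0 < x" "x + t < j"
  shows "chain_to j (map (cell j x) [0..<Suc t]) (cell j x t)"
  unfolding chain_to_def
  using assms minimal_cell_0[of x j] covers_cell_up[of x _ j]
  by (auto simp: hd_map last_map nth_append simp del: upt_Suc)

lemma rho_cell:
  assumes "0 < x" "x + t < j"
  shows "rho j (cell j x t) = t"
proof -
  have j: "0 < j"
    using assms by simp
  have "{length cs - 1 | cs. chain_to j cs (cell j x t)} = {t}"
  proof (intro equalityI subsetI)
    fix n assume "n \<in> {length cs - 1 | cs. chain_to j cs (cell j x t)}"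
    then show "n \<in> {t}"
      using chain_to_length[OF j] cell_div_mod(1)[OF assms(2)] by auto
  next
    fix n assume "n \<in> {t}"
    then show "n \<in> {length cs - 1 | cs. chain_to j cs (cell j x t)}"
      using chain_to_cell[OF assms] by force
  qed
  then show ?thesis
    unfolding rho_def by simp
qed

section \<open>Order ideals as height sequences\<close>

fun rises_by_le_one :: "nat \<Rightarrow> nat list \<Rightarrow> bool" where
  "rises_by_le_one h [] = True"
| "rises_by_le_one h (v # l) \<longleftrightarrow> v \<le> Suc h \<and> rises_by_le_one v l"

definition height_seqs :: "nat \<Rightarrow> nat \<Rightarrow> nat list set" where
  "height_seqs k h = {l. length l = k \<and> rises_by_le_one h l}"

lemma rises_by_le_one_iff: "rises_by_le_one h l \<longleftrightarrow> (\<forall>p<length l. l ! p \<le> Suc ((h # l) ! p))"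
  by (induction l arbitrary: h) (auto simp: less_Suc_eq_0_disj)

lemma rises_by_le_one_nth_le:
  assumes "rises_by_le_one 0 l" "p < length l"
  shows "l ! p \<le> Suc p"
  using assms(2) by (induction p) (use assms(1) rises_by_le_one_iff in fastforce)+

text \<open>Column \<open>x\<close> of the ideal has height \<open>l ! (n - x)\<close>: reading the heights from \<open>x = n\<close>
  downwards turns the ideal property into the defining condition of \<open>height_seqs n 0\<close>.\<close>

definition heights_ideal :: "nat \<Rightarrow> nat list \<Rightarrow> nat set" where
  "heights_ideal n l = {cell (Suc n) x t | x t. 0 < x \<and> x + t \<le> n \<and> t < l ! (n - x)}"

lemma cell_mem_heights_ideal:
  assumes "0 < x" "x + t \<le> n"
  shows "cell (Suc n) x t \<in> heights_ideal n l \<longleftrightarrow> t < l ! (n - x)"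
  using assms cell_inject[of _ _ "Suc n"] unfolding heights_ideal_def by fastforce

lemma heights_ideal_subset_T: "heights_ideal n l \<subseteq> T (Suc n)"
  unfolding heights_ideal_def using cell_in_T by fastforce

lemma heights_ideal_covers_closed:
  assumes l: "l \<in> height_seqs n 0" and c: "covers (Suc n) a b" and a: "a \<in> heights_ideal n l"
  shows "b \<in> heights_ideal n l"
proof -
  obtain x t where xt: "a = cell (Suc n) x (Suc t)" "b = cell (Suc n) x t \<or> b = cell (Suc n) (Suc x) t"
    "0 < x" "x + Suc t \<le> n"
    using covers_cellE[OF _ c] by (metis less_Suc_eq_le zero_less_Suc)
  have up: "Suc t < l ! (n - x)"
    using a xt cell_mem_heights_ideal by simp
  show ?thesis
  proof (cases "b = cell (Suc n) x t")
    case True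
    then show ?thesis using up xt cell_mem_heights_ideal by simp
  next
    case False
    have "l ! (n - x) \<le> Suc (l ! (n - Suc x))"
      using l xt(3,4) rises_by_le_one_iff[of 0 l] unfolding height_seqs_def
      by (auto simp: Suc_diff_Suc dest: spec[of _ "n - x"])
    then show ?thesis using False up xt cell_mem_heights_ideal by simp
  qed
qed

lemma heights_ideal_in_ideals:
  assumes "l \<in> height_seqs n 0"
  shows "heights_ideal n l \<in> ideals (Suc n)"
proof -
  have "b \<in> heights_ideal n l" if "(b, a) \<in> {(x, y). covers (Suc n) y x}\<^sup>*" "a \<in> heights_ideal n l" for a b
    using that by (induction rule: converse_rtrancl_induct) (auto intro: heights_ideal_covers_closed[OF assms])
  then show ?thesis
    unfolding ideals_def Tle_def using heights_ideal_subset_T by blast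
qed

lemma inj_on_heights_ideal: "inj_on (heights_ideal n) (height_seqs n 0)"
proof (rule inj_onI, rule nth_equalityI)
  fix l l' assume l: "l \<in> height_seqs n 0" and l': "l' \<in> height_seqs n 0"
    and eq: "heights_ideal n l = heights_ideal n l'"
  then show "length l = length l'"
    unfolding height_seqs_def by simp
  have le: "\<not> l ! p < l' ! p"
    if "l \<in> height_seqs n 0" "l' \<in> height_seqs n 0" "heights_ideal n l = heights_ideal n l'" "p < n"
    for l l' p
  proof
    assume lt: "l ! p < l' ! p"
    moreover have "l' ! p \<le> Suc p"
      using that rises_by_le_one_nth_le unfolding height_seqs_def by auto
    ultimately have "cell (Suc n) (n - p) (l ! p) \<in> heights_ideal n l' - heights_ideal n l"
      using that(4) cell_mem_heights_ideal[of "n - p" "l ! p" n] by simp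
    then show False
      using that(3) by blast
  qed
  fix p assume "p < length l"
  then show "l ! p = l' ! p"
    using le[OF l l' eq] le[OF l' l eq[symmetric]] l unfolding height_seqs_def by force
qed

lemma mem_down_closed_iff_less_card:
  fixes S :: "nat set"
  assumes "finite S" and down: "\<And>t. Suc t \<in> S \<Longrightarrow> t \<in> S"
  shows "t \<in> S \<longleftrightarrow> t < card S"
proof -
  have closed: "s \<in> S" if "t \<in> S" "s \<le> t" for s t
    using that(2,1) by (induction s rule: inc_induct) (auto intro: down)
  obtain d where d: "d \<notin> S"
    using ex_new_if_finite[OF infinite_UNIV_nat assms(1)] by blast
  define D where "D = (LEAST t. t \<notin> S)"
  have "D \<notin> S"
    unfolding D_def by (rule LeastI[of _ d]) (rule d)
  then have "s \<in> S \<longleftrightarrow> s < D" for s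
    using closed[of s D] not_less_Least[of s "\<lambda>t. t \<notin> S"] unfolding D_def[symmetric]
    by (cases "s < D") auto
  then have "S = {..<D}"
    by auto
  then show ?thesis
    by simp
qed

lemma ideal_covers_closed:
  assumes "I \<in> ideals j" "a \<in> I" "covers j a b"
  shows "b \<in> I"
proof -
  have "\<forall>a b. a \<in> I \<and> Tle j b a \<longrightarrow> b \<in> I"
    using assms(1) unfolding ideals_def by simp
  then show ?thesis
    using assms(2) covers_imp_Tle[OF assms(3)] by blast
qed

definition ideal_column :: "nat set \<Rightarrow> nat \<Rightarrow> nat \<Rightarrow> nat set" where
  "ideal_column I n x = {t. x + t \<le> n \<and> cell (Suc n) x t \<in> I}"

lemma mem_ideal_column_iff:
  assumes "I \<in> ideals (Suc n)" "0 < x"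
  shows "t \<in> ideal_column I n x \<longleftrightarrow> t < card (ideal_column I n x)"
proof (rule mem_down_closed_iff_less_card)
  show "finite (ideal_column I n x)"
    by (rule finite_subset[of _ "{..n}"]) (auto simp: ideal_column_def)
  show "s \<in> ideal_column I n x" if "Suc s \<in> ideal_column I n x" for s
    using that assms ideal_covers_closed[OF assms(1) _ covers_cell_up[of x s "Suc n"]]
    unfolding ideal_column_def by auto
qed

lemma card_ideal_column_le:
  assumes I: "I \<in> ideals (Suc n)" and x: "0 < x"
  shows "card (ideal_column I n x) \<le> Suc (card (ideal_column I n (Suc x)))"
proof (rule ccontr)
  let ?d = "card (ideal_column I n (Suc x))"
  assume "\<not> ?thesis"
  then have "Suc ?d \<in> ideal_column I n x"
    using mem_ideal_column_iff[OF I x] by auto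
  then have "?d \<in> ideal_column I n (Suc x)"
    using x ideal_covers_closed[OF I _ covers_cell_diag[of x ?d "Suc n"]]
    unfolding ideal_column_def by auto
  then show False
    using mem_ideal_column_iff[OF I, of "Suc x"] by auto
qed

lemma card_ideal_column_last: "card (ideal_column I n n) \<le> 1"
proof -
  have "ideal_column I n n \<subseteq> {0}"
    unfolding ideal_column_def by auto
  then show ?thesis
    using card_mono[of "{0}" "ideal_column I n n"] by simp
qed

definition ideal_heights :: "nat set \<Rightarrow> nat \<Rightarrow> nat list" where
  "ideal_heights I n = map (\<lambda>p. card (ideal_column I n (n - p))) [0..<n]"

lemma ideal_heights_nth:
  assumes "0 < x" "x \<le> n"
  shows "ideal_heights I n ! (n - x) = card (ideal_column I n x)"
  using assms by (simp add: ideal_heights_def)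

lemma ideal_heights_in_height_seqs:
  assumes I: "I \<in> ideals (Suc n)"
  shows "ideal_heights I n \<in> height_seqs n 0"
proof -
  have "ideal_heights I n ! p \<le> Suc ((0 # ideal_heights I n) ! p)" if "p < n" for p
  proof (cases p)
    case 0
    then show ?thesis
      using card_ideal_column_last that by (simp add: ideal_heights_def)
  next
    case (Suc q)
    then have "Suc (n - p) = n - q"
      using that by (simp add: Suc_diff_Suc)
    then show ?thesis
      using card_ideal_column_le[OF I, of "n - p"] that Suc by (simp add: ideal_heights_def)
  qed
  then show ?thesis
    unfolding height_seqs_def rises_by_le_one_iff by (simp add: ideal_heights_def)
qed

lemma heights_ideal_ideal_heights:
  assumes I: "I \<in> ideals (Suc n)"
  shows "heights_ideal n (ideal_heights I n) = I"
proof (intro equalityI subsetI)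
  fix a assume "a \<in> heights_ideal n (ideal_heights I n)"
  then obtain x t where xt: "a = cell (Suc n) x t" "0 < x" "x + t \<le> n" "t < ideal_heights I n ! (n - x)"
    unfolding heights_ideal_def by blast
  then have "t \<in> ideal_column I n x"
    using mem_ideal_column_iff[OF I] ideal_heights_nth by simp
  then show "a \<in> I"
    using xt unfolding ideal_column_def by simp
next
  fix a assume a: "a \<in> I"
  then have "a \<in> T (Suc n)"
    using I unfolding ideals_def by blast
  then obtain x t where xt: "a = cell (Suc n) x t" "0 < x" "x + t < Suc n"
    using T_cellE[of "Suc n" a] by blast
  then have "t \<in> ideal_column I n x"
    using a unfolding ideal_column_def by simp
  then show "a \<in> heights_ideal n (ideal_heights I n)"
    using xt mem_ideal_column_iff[OF I] ideal_heights_nth cell_mem_heights_ideal by simp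
qed

lemma sum_lessThan_eq_choose_two: "(\<Sum>t<d. t) = d choose 2"
  by (induction d) (simp_all add: binomial_Suc_Suc[of _ 1, simplified] numeral_2_eq_2)

lemma rank_sum_heights_ideal:
  assumes l: "l \<in> height_seqs n 0"
  shows "(\<Sum>a\<in>heights_ideal n l. rho (Suc n) a) = (\<Sum>v\<leftarrow>l. v choose 2)"
proof -
  define A where "A = (SIGMA x:{1..n}. {..<l ! (n - x)})"
  have bound: "0 < x \<and> x + t \<le> n" if "(x, t) \<in> A" for x t
    using that l rises_by_le_one_nth_le[of l "n - x"] unfolding A_def height_seqs_def by force
  have ideal: "heights_ideal n l = (\<lambda>(x, t). cell (Suc n) x t) ` A"
    using bound unfolding heights_ideal_def A_def by force
  have inj: "inj_on (\<lambda>(x, t). cell (Suc n) x t) A"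
  proof (rule inj_onI, clarify)
    fix x t x' t' assume "(x, t) \<in> A" "(x', t') \<in> A" "cell (Suc n) x t = cell (Suc n) x' t'"
    then show "x = x' \<and> t = t'"
      using bound cell_inject[of x t "Suc n" x' t'] by fastforce
  qed
  have "(\<Sum>a\<in>heights_ideal n l. rho (Suc n) a) = (\<Sum>(x, t)\<in>A. t)"
    unfolding ideal sum.reindex[OF inj]
  proof (rule sum.cong, simp, clarify)
    fix x t assume "(x, t) \<in> A"
    then show "(rho (Suc n) \<circ> (\<lambda>(x, t). cell (Suc n) x t)) (x, t) = t"
      using bound rho_cell[of x t "Suc n"] by fastforce
  qed
  also have "\<dots> = (\<Sum>x\<in>{1..n}. (l ! (n - x)) choose 2)"
    unfolding A_def by (simp add: sum.Sigma[symmetric] sum_lessThan_eq_choose_two)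
  also have "\<dots> = (\<Sum>p<n. (l ! p) choose 2)"
    by (rule sum.reindex_bij_witness[of _ "\<lambda>p. n - p" "\<lambda>x. n - x"]) auto
  also have "\<dots> = (\<Sum>v\<leftarrow>l. v choose 2)"
    using l unfolding height_seqs_def by (simp add: sum_list_sum_nth atLeast0LessThan)
  finally show ?thesis .
qed

lemma rank_sum_ideals_Suc:
  "(\<Sum>I\<in>ideals (Suc n). \<Sum>a\<in>I. rho (Suc n) a) = (\<Sum>l\<in>height_seqs n 0. \<Sum>v\<leftarrow>l. v choose 2)"
proof -
  have "ideals (Suc n) = heights_ideal n ` height_seqs n 0"
  proof (intro equalityI subsetI)
    fix I assume "I \<in> ideals (Suc n)"
    then show "I \<in> heights_ideal n ` height_seqs n 0"
      using ideal_heights_in_height_seqs heights_ideal_ideal_heights by (metis image_eqI)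
  qed (auto intro: heights_ideal_in_ideals)
  then show ?thesis
    by (simp add: sum.reindex[OF inj_on_heights_ideal] rank_sum_heights_ideal)
qed

section \<open>Counting height sequences\<close>

text \<open>For \<open>m = 0\<close> the truncated subtraction in \<open>2*i + m - 1\<close> only matters at \<open>i = 0\<close>,
  where both readings give a binomial coefficient \<open>choose 0 = 1\<close>.\<close>

definition pow4_binom_sum :: "nat \<Rightarrow> nat \<Rightarrow> int" where
  "pow4_binom_sum k m = (\<Sum>i\<le>k. 4 ^ (k - i) * int ((2*i + m - 1) choose i))"

lemma pow4_binom_sum_0 [simp]: "pow4_binom_sum 0 m = 1"
  by (simp add: pow4_binom_sum_def)

lemma pow4_binom_sum_Suc:
  "pow4_binom_sum (Suc k) m = 4 * pow4_binom_sum k m + int ((2*k + m + 1) choose Suc k)"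
proof -
  have "(\<Sum>i\<le>k. 4 ^ (Suc k - i) * int ((2*i + m - 1) choose i)) = 4 * pow4_binom_sum k m"
    unfolding pow4_binom_sum_def sum_distrib_left by (rule sum.cong) (auto simp: Suc_diff_le)
  then show ?thesis
    by (simp add: pow4_binom_sum_def)
qed

lemma pow4_binom_sum_pascal:
  "pow4_binom_sum (Suc k) (Suc m) = pow4_binom_sum (Suc k) m + pow4_binom_sum k (m + 2)"
proof -
  have "(\<Sum>i\<le>k. 4 ^ (k - i) * int (Suc (2*i + m + 1) choose Suc i)) =
     (\<Sum>i\<le>k. 4 ^ (k - i) * int ((2*i + m + 1) choose Suc i)) + (\<Sum>i\<le>k. 4 ^ (k - i) * int ((2*i + m + 1) choose i))"
    unfolding sum.distrib[symmetric] by (rule sum.cong) (simp_all add: binomial_Suc_Suc algebra_simps)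
  then show ?thesis
    unfolding pow4_binom_sum_def sum.atMost_Suc_shift by simp
qed

lemma pow4_binom_sum_boundary:
  "4 * pow4_binom_sum k 0 - 4 * pow4_binom_sum k 1 + pow4_binom_sum k 2 = int ((2*k + 1) choose (k + 1))"
proof (induction k)
  case 0 then show ?case by simp
next
  case (Suc k)
  have "(2*k + 2) choose (k + 1) = 2 * ((2*k + 1) choose (k + 1))"
    using binomial_symmetric[of k "2*k + 1"] binomial_Suc_Suc[of "2*k + 1" k] by simp
  moreover have "(2*k + 3) choose (k + 1) = (2*k + 3) choose (k + 2)"
    using binomial_symmetric[of "k + 1" "2*k + 3"] by simp
  ultimately show ?case
    using Suc by (simp add: pow4_binom_sum_Suc algebra_simps eval_nat_numeral)
qed

definition count_formula :: "nat \<Rightarrow> nat \<Rightarrow> int" where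
  "count_formula k h = 8 * pow4_binom_sum k h - 12 * pow4_binom_sum k (h + 1)
     + 6 * pow4_binom_sum k (h + 2) - pow4_binom_sum k (h + 3)"

lemma count_formula_0 [simp]: "count_formula 0 h = 1"
  by (simp add: count_formula_def)

lemma count_formula_Suc: "count_formula (Suc k) h = (\<Sum>v\<le>Suc h. count_formula k v)"
proof (induction h)
  case 0
  show ?case
    using pow4_binom_sum_pascal[of k 0] pow4_binom_sum_pascal[of k 1] pow4_binom_sum_pascal[of k 2]
      pow4_binom_sum_Suc[of k 0] pow4_binom_sum_boundary[of k]
    by (simp add: count_formula_def algebra_simps eval_nat_numeral)
next
  case (Suc h)
  have "count_formula (Suc k) (Suc h) = count_formula (Suc k) h + count_formula k (h + 2)"
    using pow4_binom_sum_pascal[of k h] pow4_binom_sum_pascal[of k "h + 1"]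
      pow4_binom_sum_pascal[of k "h + 2"] pow4_binom_sum_pascal[of k "h + 3"]
    by (simp add: count_formula_def algebra_simps eval_nat_numeral)
  then show ?case
    using Suc by simp
qed

fun weight_formula :: "nat \<Rightarrow> nat \<Rightarrow> int" where
  "weight_formula 0 h = 0"
| "weight_formula (Suc k) h = (int h + 2) *
     (2 * int h * (2 * int h - 1) * pow4_binom_sum k (h + 2)
      - (4 * int h ^ 2 - 5 * int h + 3) * pow4_binom_sum k (h + 3)
      + (int h ^ 2 - 2 * int h + 3) * pow4_binom_sum k (h + 4))"

lemma weight_formula_Suc:
  "weight_formula (Suc k) h = (\<Sum>v\<le>Suc h. 3 * int v * (int v - 1) * count_formula k v + weight_formula k v)"
proof (induction h)
  case 0
  show ?case
  proof (cases k)
    case (Suc k')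
    then show ?thesis
      using pow4_binom_sum_pascal[of k' 2] pow4_binom_sum_pascal[of k' 3]
      by (simp add: algebra_simps eval_nat_numeral)
  qed simp
next
  case (Suc h)
  have "weight_formula (Suc k) (Suc h) = weight_formula (Suc k) h
      + 3 * (int h + 2) * (int h + 1) * count_formula k (h + 2) + weight_formula k (h + 2)"
  proof (cases k)
    case 0
    then show ?thesis
      by (simp add: count_formula_def algebra_simps power2_eq_square eval_nat_numeral)
  next
    case (Suc k')
    then show ?thesis
      using pow4_binom_sum_pascal[of k' "h + 2"] pow4_binom_sum_pascal[of k' "h + 3"]
        pow4_binom_sum_pascal[of k' "h + 4"]
      by (simp add: count_formula_def algebra_simps power2_eq_square eval_nat_numeral)
  qed
  then show ?case
    using Suc by (simp add: algebra_simps)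
qed

lemma height_seqs_0 [simp]: "height_seqs 0 h = {[]}"
  by (auto simp: height_seqs_def)

lemma height_seqs_Suc: "height_seqs (Suc k) h = (\<Union>v\<le>Suc h. (#) v ` height_seqs k v)"
  by (auto simp: height_seqs_def length_Suc_conv)

lemma finite_height_seqs [simp]: "finite (height_seqs k h)"
  by (induction k arbitrary: h) (simp_all add: height_seqs_Suc)

lemma sum_height_seqs_Suc:
  "(\<Sum>l\<in>height_seqs (Suc k) h. f l) = (\<Sum>v\<le>Suc h. \<Sum>l\<in>height_seqs k v. f (v # l))"
  unfolding height_seqs_Suc
  by (subst sum.UNION_disjoint) (auto simp: sum.reindex)

lemma card_height_seqs: "int (card (height_seqs k h)) = count_formula k h"
proof (induction k arbitrary: h)
  case (Suc k)
  have "card (height_seqs (Suc k) h) = (\<Sum>v\<le>Suc h. card (height_seqs k v))"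
    using sum_height_seqs_Suc[of "\<lambda>_. 1 :: nat"] by simp
  then show ?case
    using Suc by (simp add: count_formula_Suc)
qed simp

lemma two_times_choose_two: "2 * int (n choose 2) = int n * (int n - 1)"
  by (induction n) (simp_all add: binomial_Suc_Suc[of _ 1, simplified] numeral_2_eq_2 algebra_simps)

lemma height_seqs_weight:
  "6 * int (\<Sum>l\<in>height_seqs k h. \<Sum>v\<leftarrow>l. v choose 2) = weight_formula k h"
proof (induction k arbitrary: h)
  case (Suc k)
  have "6 * int (\<Sum>l\<in>height_seqs (Suc k) h. \<Sum>v\<leftarrow>l. v choose 2)
      = (\<Sum>v\<le>Suc h. 3 * (2 * int (v choose 2)) * int (card (height_seqs k v))
            + 6 * int (\<Sum>l\<in>height_seqs k v. \<Sum>v\<leftarrow>l. v choose 2))"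
    by (simp add: sum_height_seqs_Suc sum.distrib sum_distrib_left algebra_simps)
  also have "\<dots> = (\<Sum>v\<le>Suc h. 3 * int v * (int v - 1) * count_formula k v + weight_formula k v)"
    by (simp only: two_times_choose_two card_height_seqs Suc.IH mult.assoc)
  finally show ?case
    by (simp only: weight_formula_Suc)
qed simp

lemma height_weight_eq_pow4_binom_sum:
  "int (\<Sum>l\<in>height_seqs (Suc k) 0. \<Sum>v\<leftarrow>l. v choose 2) = pow4_binom_sum k 4 - pow4_binom_sum k 3"
  using height_seqs_weight[of "Suc k" 0] by simp

lemma height_weight_Suc:
  "(\<Sum>l\<in>height_seqs (Suc n) 0. \<Sum>v\<leftarrow>l. v choose 2)
     = 4 * (\<Sum>l\<in>height_seqs n 0. \<Sum>v\<leftarrow>l. v choose 2) + ((2*n + 2) choose (n + 3))"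
proof (cases n)
  case 0
  have "int (\<Sum>l\<in>height_seqs (Suc 0) 0. \<Sum>v\<leftarrow>l. v choose 2) = 0"
    using height_weight_eq_pow4_binom_sum[of 0] by simp
  then have "(\<Sum>l\<in>height_seqs (Suc 0) 0. \<Sum>v\<leftarrow>l. v choose 2) = 0"
    by (simp only: of_nat_eq_0_iff)
  then show ?thesis
    unfolding 0 by (simp only:) simp
next
  case (Suc k)
  have "(2*k + 5) choose (k + 1) = ((2*k + 4) choose (k + 4)) + ((2*k + 4) choose (k + 1))"
    using binomial_Suc_Suc[of "2*k + 4" k] binomial_symmetric[of k "2*k + 4"]
    by (simp add: algebra_simps)
  moreover have "pow4_binom_sum (Suc k) 4 = 4 * pow4_binom_sum k 4 + int ((2*k + 5) choose (k + 1))"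
    "pow4_binom_sum (Suc k) 3 = 4 * pow4_binom_sum k 3 + int ((2*k + 4) choose (k + 1))"
    using pow4_binom_sum_Suc[of k 4] pow4_binom_sum_Suc[of k 3] by (simp_all add: algebra_simps)
  ultimately have "int (\<Sum>l\<in>height_seqs (Suc (Suc k)) 0. \<Sum>v\<leftarrow>l. v choose 2)
      = int (4 * (\<Sum>l\<in>height_seqs (Suc k) 0. \<Sum>v\<leftarrow>l. v choose 2) + ((2*k + 4) choose (k + 4)))"
    using height_weight_eq_pow4_binom_sum[of k] height_weight_eq_pow4_binom_sum[of "Suc k"]
    by (simp only: of_nat_add of_nat_mult of_nat_numeral) (simp add: algebra_simps)
  moreover have "2 * Suc k + 2 = 2*k + 4" "Suc k + 3 = k + 4"
    by simp_all
  ultimately show ?thesis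
    unfolding Suc of_nat_eq_iff by (simp only:)
qed

section \<open>The closed form\<close>

lemma add_one_times_binomial: "(k + 1) * ((n + 1) choose (k + 1)) = (n + 1) * (n choose k)"
  using Suc_times_binomial[of k n] by simp

lemma binomial_shift_ratio:
  "2 * (2 * real j + 1) * (real j + 2) * real ((2*j) choose (j + 2))
     = real j * (real j - 1) * real ((2*j + 2) choose (j + 1))"
proof (cases "j < 2")
  case True then show ?thesis by (auto simp: less_2_cases_iff)
next
  case False
  then obtain i where j: "j = i + 2" by (metis add.commute le_Suc_ex not_less)
  have "(i + 3) * ((2*i + 6) choose (i + 3)) = (i + 3) * (2 * ((2*i + 5) choose (i + 2)))"
    using add_one_times_binomial[of "i + 2" "2*i + 5"] by (simp add: algebra_simps numeral_eq_Suc)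
  then have c6: "(2*i + 6) choose (i + 3) = 2 * ((2*i + 5) choose (i + 2))"
    by simp
  have c5: "(i + 2) * ((2*i + 5) choose (i + 2)) = (2*i + 5) * ((2*i + 4) choose (i + 1))"
    using add_one_times_binomial[of "i + 1" "2*i + 4"] by (simp add: algebra_simps numeral_eq_Suc)
  have c4: "(i + 1) * ((2*i + 4) choose (i + 1)) = (i + 4) * ((2*i + 4) choose (i + 4))"
    using add_one_times_binomial[of i "2*i + 3"] binomial_absorb_comp[of "2*i + 4" i]
      binomial_symmetric[of i "2*i + 4"] by (simp add: algebra_simps numeral_eq_Suc)
  have "(i + 2) * (i + 1) * ((2*i + 6) choose (i + 3)) = 2 * (i + 1) * ((i + 2) * ((2*i + 5) choose (i + 2)))"
    unfolding c6 by (simp add: algebra_simps)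
  also have "\<dots> = 2 * (2*i + 5) * ((i + 1) * ((2*i + 4) choose (i + 1)))"
    unfolding c5 by (simp add: algebra_simps)
  finally have "(i + 2) * (i + 1) * ((2*i + 6) choose (i + 3)) = 2 * (2*i + 5) * (i + 4) * ((2*i + 4) choose (i + 4))"
    unfolding c4 by (simp add: algebra_simps)
  from arg_cong[OF this, of real] show ?thesis
    unfolding j by (simp add: algebra_simps numeral_eq_Suc)
qed

lemma central_binomial_Suc:
  "(j + 2) * ((2*j + 4) choose (j + 2)) = 2 * (2*j + 3) * ((2*j + 2) choose (j + 1))"
proof -
  have "(j + 2) * ((2*j + 4) choose (j + 2)) = 2 * ((j + 2) * ((2*j + 3) choose (j + 1)))"
    using add_one_times_binomial[of "j + 1" "2*j + 3"] by (simp add: algebra_simps numeral_eq_Suc)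
  also have "(j + 2) * ((2*j + 3) choose (j + 1)) = (2*j + 3) * ((2*j + 2) choose (j + 1))"
    using add_one_times_binomial[of "j + 1" "2*j + 2"] binomial_symmetric[of "j + 1" "2*j + 3"]
    by (simp add: algebra_simps numeral_eq_Suc)
  finally show ?thesis by simp
qed

definition closed_form :: "nat \<Rightarrow> real" where
  "closed_form j = real (j^2 + 5*j + 2) / real (8*j + 4) * real ((2*j + 2) choose (j + 1)) - 4 ^ j"

lemma closed_form_0: "closed_form 0 = 0"
  by (simp add: closed_form_def)

lemma closed_form_Suc: "closed_form (Suc j) = 4 * closed_form j + real ((2*j) choose (j + 2))"
proof -
  define B where "B = real ((2*j + 2) choose (j + 1))"
  have central: "real ((2*j + 4) choose (j + 2)) = 2 * (2 * real j + 3) * B / (real j + 2)"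
    using arg_cong[OF central_binomial_Suc[of j], of real] unfolding B_def by (simp add: field_simps)
  have "2 * (2 * real j + 1) * (real j + 2) > 0"
    by (simp add: add_pos_nonneg)
  then have shift: "real ((2*j) choose (j + 2))
      = real j * (real j - 1) * B / (2 * (2 * real j + 1) * (real j + 2))"
    using binomial_shift_ratio[of j] unfolding B_def by (simp add: eq_divide_eq mult_ac)
  have "2 * Suc j + 2 = 2*j + 4" "Suc j + 1 = j + 2"
    by simp_all
  then have step: "closed_form (Suc j) = real (Suc j ^ 2 + 5 * Suc j + 2) / real (8 * Suc j + 4)
      * real ((2*j + 4) choose (j + 2)) - 4 ^ Suc j"
    unfolding closed_form_def by (simp only:)
  have "real j + 2 > 0" "8 * real j + 4 > 0" "8 * real j + 12 > 0" "2 * real j + 1 > 0"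
    by linarith+
  then show ?thesis
    unfolding step unfolding central shift closed_form_def B_def[symmetric]
    by (simp add: divide_simps) (simp add: algebra_simps power2_eq_square)
qed

lemma ideals_0: "ideals 0 = {{}}"
  by (auto simp: ideals_def T_def)

lemma rank_sum_Suc:
  "(\<Sum>I\<in>ideals (Suc j). \<Sum>a\<in>I. rho (Suc j) a)
     = 4 * (\<Sum>I\<in>ideals j. \<Sum>a\<in>I. rho j a) + ((2*j) choose (j + 2))"
proof (cases j)
  case 0
  then show ?thesis
    by (simp add: rank_sum_ideals_Suc ideals_0)
next
  case (Suc n)
  have "2 * Suc n = 2*n + 2" "Suc n + 2 = n + 3"
    by simp_all
  then show ?thesis
    unfolding Suc rank_sum_ideals_Suc using height_weight_Suc[of n] by (simp only:)
qed

theorem mainTheorem6: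
  fixes j :: nat
  shows "real (\<Sum>I\<in>ideals j. \<Sum>a\<in>I. rho j a)
     = (real (j^2 + 5*j + 2) / real (8*j + 4)) * real ((2*j + 2) choose (j + 1)) - 4 ^ j"
proof -
  have "real (\<Sum>I\<in>ideals j. \<Sum>a\<in>I. rho j a) = closed_form j"
  proof (induction j)
    case 0
    show ?case
      by (simp add: ideals_0 closed_form_0)
  next
    case (Suc j)
    then show ?case
      by (simp add: rank_sum_Suc closed_form_Suc)
  qed
  then show ?thesis
    by (simp add: closed_form_def)
qed

end
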